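(* Let $G$ be a generalized split graph (GSP graph). Then $p(G)\le 2$.
   Context: A graph $G$ is a GSP (generalized split) graph if either $G$ or its complement $\overline{G}$ has the following form: its vertex set is partitioned into $V_1,V_2$ where $V_1$ spans a complete graph and $V_2$ spans a disjoint union of complete graphs with no edges between them. A comparability graph is a graph admitting a transitive orientation. $p(G)$ is the minimum number $m$ such that $E(G)$ is the union of the edge sets of $m$ pairwise edge-disjoint comparability subgraphs of $G$. *)

theory Defs
  imports Main
begin

definition simple_graph :: "'a set \<Rightarrow> 'a set set \<Rightarrow> bool" where
  "simple_graph V E \<longleftrightarrow> finite V \<and>
     (\<forall>e\<in>E. \<exists>u v. u \<in> V \<and> v \<in> V \<and> u \<noteq> v \<and> e = {u, v})"

definition compl_edges :: "'a set \<Rightarrow> 'a set set \<Rightarrow> 'a set set" where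
  "compl_edges V E = {{u, v} | u v. u \<in> V \<and> v \<in> V \<and> u \<noteq> v \<and> {u, v} \<notin> E}"

definition is_clique :: "'a set set \<Rightarrow> 'a set \<Rightarrow> bool" where
  "is_clique E S \<longleftrightarrow> (\<forall>u\<in>S. \<forall>v\<in>S. u \<noteq> v \<longrightarrow> {u, v} \<in> E)"

definition union_of_cliques :: "'a set set \<Rightarrow> 'a set \<Rightarrow> bool" where
  "union_of_cliques E S \<longleftrightarrow> (\<exists>P. \<Union>P = S \<and> {} \<notin> P \<and>
     (\<forall>A\<in>P. \<forall>B\<in>P. A \<noteq> B \<longrightarrow> A \<inter> B = {}) \<and>
     (\<forall>A\<in>P. is_clique E A) \<and>
     (\<forall>A\<in>P. \<forall>B\<in>P. A \<noteq> B \<longrightarrow> (\<forall>u\<in>A. \<forall>v\<in>B. {u, v} \<notin> E)))"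

definition split_form :: "'a set \<Rightarrow> 'a set set \<Rightarrow> bool" where
  "split_form V E \<longleftrightarrow> (\<exists>V1 V2. V1 \<union> V2 = V \<and> V1 \<inter> V2 = {} \<and>
     is_clique E V1 \<and> union_of_cliques E V2)"

definition GSP :: "'a set \<Rightarrow> 'a set set \<Rightarrow> bool" where
  "GSP V E \<longleftrightarrow> split_form V E \<or> split_form V (compl_edges V E)"

definition transitive_orientation :: "'a set set \<Rightarrow> ('a \<times> 'a) set \<Rightarrow> bool" where
  "transitive_orientation F R \<longleftrightarrow>
     (\<forall>(u, v)\<in>R. {u, v} \<in> F) \<and>
     (\<forall>u v. u \<noteq> v \<longrightarrow> {u, v} \<in> F \<longrightarrow> ((u, v) \<in> R \<longleftrightarrow> (v, u) \<notin> R)) \<and>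
     trans R"

definition comparability :: "'a set set \<Rightarrow> bool" where
  "comparability F \<longleftrightarrow> (\<exists>R. transitive_orientation F R)"

definition p_num :: "'a set \<Rightarrow> 'a set set \<Rightarrow> nat" where
  "p_num V E = (LEAST m. \<exists>F :: nat \<Rightarrow> 'a set set.
      (\<forall>i<m. F i \<subseteq> E \<and> comparability (F i)) \<and>
      (\<forall>i<m. \<forall>j<m. i \<noteq> j \<longrightarrow> F i \<inter> F j = {}) \<and>
      (\<Union>i<m. F i) = E)"

end

theory Submission
  imports Defs
begin

text \<open>The edges of \<open>G\<close> between \<open>V\<^sub>1\<close> and \<open>V\<^sub>2\<close> form a bipartite graph, transitively
  oriented from \<open>V\<^sub>1\<close> to \<open>V\<^sub>2\<close>. The remaining edges form a second comparability graph.
  If \<open>G\<close> itself has the split form, they form a disjoint union of cliques (\<open>V\<^sub>1\<close> and the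
  cliques of \<open>V\<^sub>2\<close>), oriented along any strict linear order of the vertices. If the complement
  has it, they form the complete multipartite graph whose parts are the cliques of \<open>V\<^sub>2\<close>,
  oriented along any strict linear order of the parts.\<close>

definition edges_of :: "('a \<times> 'a) set \<Rightarrow> 'a set set" where
  "edges_of R = {{u, v} | u v. (u, v) \<in> R}"

definition cross_edges :: "'a set set \<Rightarrow> 'a set \<Rightarrow> 'a set \<Rightarrow> 'a set set" where
  "cross_edges E X Y = {e \<in> E. \<exists>u\<in>X. \<exists>v\<in>Y. e = {u, v}}"

definition cluster_edges :: "'a set set \<Rightarrow> 'a set set" where
  "cluster_edges Q = {{u, v} | u v. u \<noteq> v \<and> (\<exists>A\<in>Q. u \<in> A \<and> v \<in> A)}"

definition multipartite_edges :: "'a set set \<Rightarrow> 'a set set" where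
  "multipartite_edges P = {{u, v} | u v. \<exists>A\<in>P. \<exists>B\<in>P. A \<noteq> B \<and> u \<in> A \<and> v \<in> B}"

lemma strict_linear_order_exists: "\<exists>r :: 'a rel. strict_linear_order r"
proof -
  obtain r :: "'a rel" where "Well_order r" "Field r = UNIV"
    using well_ordering[where 'a = 'a] by (elim exE conjE)
  then have "linear_order r"
    by (metis well_order_on_def)
  then have "strict_linear_order (r - Id)"
    by (rule strict_linear_order_on_diff_Id)
  then show ?thesis ..
qed

lemma asym_if_strict_linear_order: "strict_linear_order r \<Longrightarrow> asym r"
  unfolding strict_linear_order_on_def by (metis asym_on_iff_irrefl_on_if_trans_on)

lemma comparability_edges_of:
  assumes "trans R" and "asym R"
  shows "comparability (edges_of R)"
  unfolding comparability_def transitive_orientation_def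
proof (intro exI conjI allI impI)
  show "\<forall>(u, v)\<in>R. {u, v} \<in> edges_of R"
    unfolding edges_of_def by blast
  show "trans R" by fact
next
  fix u v
  assume "{u, v} \<in> edges_of R"
  then have "(u, v) \<in> R \<or> (v, u) \<in> R"
    unfolding edges_of_def by (auto simp: doubleton_eq_iff)
  then show "(u, v) \<in> R \<longleftrightarrow> (v, u) \<notin> R"
    using \<open>asym R\<close> by (auto dest: asymD)
qed

lemma cross_edges_subset: "cross_edges E X Y \<subseteq> E"
  unfolding cross_edges_def by blast

lemma comparability_cross_edges:
  assumes "X \<inter> Y = {}"
  shows "comparability (cross_edges E X Y)"
proof -
  define R where "R = {(u, v). u \<in> X \<and> v \<in> Y \<and> {u, v} \<in> E}"
  have "trans R" "asym R"
    using assms by (auto simp: R_def trans_def)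
  moreover have "edges_of R = cross_edges E X Y"
    by (auto simp: R_def edges_of_def cross_edges_def)
  ultimately show ?thesis
    using comparability_edges_of by metis
qed

lemma doubleton_in_cross_edgesI:
  assumes "{u, v} \<in> E" and "u \<in> X \<and> v \<in> Y \<or> v \<in> X \<and> u \<in> Y"
  shows "{u, v} \<in> cross_edges E X Y"
  using assms unfolding cross_edges_def by (blast intro: insert_commute)

lemma doubleton_notin_cross_edges:
  assumes "X \<inter> Y = {}" and "{u, v} \<subseteq> X \<or> {u, v} \<subseteq> Y"
  shows "{u, v} \<notin> cross_edges E X Y"
  using assms unfolding cross_edges_def by (auto simp: doubleton_eq_iff)

lemma edges_of_eqI:
  assumes "\<And>u v. (u, v) \<in> R \<Longrightarrow> {u, v} \<in> F"
    and "\<And>e. e \<in> F \<Longrightarrow> \<exists>u v. e = {u, v} \<and> ((u, v) \<in> R \<or> (v, u) \<in> R)"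
  shows "edges_of R = F"
  using assms unfolding edges_of_def by (blast intro: insert_commute)

lemma pairwise_disjnt_eq:
  assumes "pairwise disjnt P" and "A \<in> P" "B \<in> P" and "x \<in> A" "x \<in> B"
  shows "A = B"
  using assms unfolding pairwise_def disjnt_def by blast

lemma comparability_cluster_edges:
  assumes "pairwise disjnt Q"
  shows "comparability (cluster_edges Q)"
proof -
  obtain r :: "'a rel" where r: "strict_linear_order r"
    using strict_linear_order_exists by blast
  define R where "R = {(u, v) \<in> r. \<exists>A\<in>Q. u \<in> A \<and> v \<in> A}"
  have "trans R"
    using r pairwise_disjnt_eq[OF assms] unfolding R_def strict_linear_order_on_def trans_def
    by blast
  moreover have "asym R"
    using asym_if_strict_linear_order[OF r] unfolding R_def asym_iff by blast
  moreover have "edges_of R = cluster_edges Q"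
  proof (rule edges_of_eqI)
    fix u v
    assume "(u, v) \<in> R"
    moreover from this have "u \<noteq> v"
      using r unfolding R_def strict_linear_order_on_def irrefl_def by blast
    ultimately show "{u, v} \<in> cluster_edges Q"
      unfolding R_def cluster_edges_def by blast
  next
    fix e
    assume "e \<in> cluster_edges Q"
    then obtain u v A where "u \<noteq> v" "A \<in> Q" "u \<in> A" "v \<in> A" "e = {u, v}"
      unfolding cluster_edges_def by blast
    moreover from \<open>u \<noteq> v\<close> have "(u, v) \<in> r \<or> (v, u) \<in> r"
      using r unfolding strict_linear_order_on_def total_on_def by blast
    ultimately show "\<exists>u v. e = {u, v} \<and> ((u, v) \<in> R \<or> (v, u) \<in> R)"
      unfolding R_def by blast
  qed
  ultimately show ?thesis
    using comparability_edges_of by metis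
qed

lemma comparability_multipartite_edges:
  assumes "pairwise disjnt P"
  shows "comparability (multipartite_edges P)"
proof -
  obtain r :: "'a set rel" where r: "strict_linear_order r"
    using strict_linear_order_exists by blast
  define R where "R = {(u, v). \<exists>A\<in>P. \<exists>B\<in>P. (A, B) \<in> r \<and> u \<in> A \<and> v \<in> B}"
  have "trans R"
    using r pairwise_disjnt_eq[OF assms] unfolding R_def strict_linear_order_on_def trans_def
    by blast
  moreover have "asym R"
  proof (rule asymI)
    fix u v
    assume "(u, v) \<in> R"
    then obtain A B where "A \<in> P" "B \<in> P" "u \<in> A" "v \<in> B" "(A, B) \<in> r"
      unfolding R_def by blast
    then show "(v, u) \<notin> R"
      using asym_if_strict_linear_order[OF r] pairwise_disjnt_eq[OF assms] unfolding R_def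
      by (blast dest: asymD)
  qed
  moreover have "edges_of R = multipartite_edges P"
  proof (rule edges_of_eqI)
    fix u v
    assume "(u, v) \<in> R"
    then obtain A B where "A \<in> P" "B \<in> P" "(A, B) \<in> r" "u \<in> A" "v \<in> B"
      unfolding R_def by blast
    moreover from \<open>(A, B) \<in> r\<close> have "A \<noteq> B"
      using r unfolding strict_linear_order_on_def irrefl_def by blast
    ultimately show "{u, v} \<in> multipartite_edges P"
      unfolding multipartite_edges_def by blast
  next
    fix e
    assume "e \<in> multipartite_edges P"
    then obtain u v A B where "A \<in> P" "B \<in> P" "A \<noteq> B" "u \<in> A" "v \<in> B" "e = {u, v}"
      unfolding multipartite_edges_def by blast
    moreover from \<open>A \<noteq> B\<close> have "(A, B) \<in> r \<or> (B, A) \<in> r"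
      using r unfolding strict_linear_order_on_def total_on_def by blast
    ultimately show "\<exists>u v. e = {u, v} \<and> ((u, v) \<in> R \<or> (v, u) \<in> R)"
      unfolding R_def by blast
  qed
  ultimately show ?thesis
    using comparability_edges_of by metis
qed

lemma p_num_le_2I:
  assumes "F \<subseteq> E" and "comparability F" and "comparability (E - F)"
  shows "p_num V E \<le> 2"
proof -
  define F' :: "nat \<Rightarrow> 'a set set" where "F' i = (if i = 0 then F else E - F)" for i
  have "\<forall>i<2. F' i \<subseteq> E \<and> comparability (F' i)"
    using assms by (auto simp: F'_def)
  moreover have "\<forall>i<2. \<forall>j<2. i \<noteq> j \<longrightarrow> F' i \<inter> F' j = {}"
    by (auto simp: F'_def less_2_cases_iff)
  moreover have "(\<Union>i<2. F' i) = E"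
    using assms(1) by (auto simp: F'_def lessThan_nat_numeral)
  ultimately show ?thesis
    unfolding p_num_def by (blast intro: Least_le)
qed

lemma split_formE:
  assumes "split_form V E"
  obtains V\<^sub>1 P where "V\<^sub>1 \<union> \<Union>P = V" "V\<^sub>1 \<inter> \<Union>P = {}" "pairwise disjnt P"
    "is_clique E V\<^sub>1" "\<forall>A\<in>P. is_clique E A"
    "\<forall>A\<in>P. \<forall>B\<in>P. A \<noteq> B \<longrightarrow> (\<forall>u\<in>A. \<forall>v\<in>B. {u, v} \<notin> E)"
  using assms unfolding split_form_def union_of_cliques_def pairwise_def disjnt_def by metis

lemma doubleton_in_compl_edges_iff:
  assumes "u \<in> V" "v \<in> V" "u \<noteq> v"
  shows "{u, v} \<in> compl_edges V E \<longleftrightarrow> {u, v} \<notin> E"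
  using assms by (auto simp: compl_edges_def doubleton_eq_iff insert_commute)

lemma diff_cross_edges_eq_cluster_edges:
  assumes "simple_graph V E" and V: "V\<^sub>1 \<union> \<Union>P = V" "V\<^sub>1 \<inter> \<Union>P = {}"
    and cliques: "is_clique E V\<^sub>1" "\<forall>A\<in>P. is_clique E A"
    and no_edges: "\<forall>A\<in>P. \<forall>B\<in>P. A \<noteq> B \<longrightarrow> (\<forall>u\<in>A. \<forall>v\<in>B. {u, v} \<notin> E)"
  shows "E - cross_edges E V\<^sub>1 (\<Union>P) = cluster_edges (insert V\<^sub>1 P)"
proof
  show "E - cross_edges E V\<^sub>1 (\<Union>P) \<subseteq> cluster_edges (insert V\<^sub>1 P)"
  proof
    fix e
    assume e: "e \<in> E - cross_edges E V\<^sub>1 (\<Union>P)"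
    then obtain u v where uv: "u \<in> V" "v \<in> V" "u \<noteq> v" and e_eq: "e = {u, v}"
      using assms(1) unfolding simple_graph_def by blast
    have "\<exists>A\<in>insert V\<^sub>1 P. u \<in> A \<and> v \<in> A"
    proof (cases "u \<in> V\<^sub>1 \<or> v \<in> V\<^sub>1")
      case True
      then show ?thesis
        using e e_eq uv V doubleton_in_cross_edgesI[of u v E V\<^sub>1 "\<Union>P"] by blast
    next
      case False
      then obtain A B where "A \<in> P" "B \<in> P" "u \<in> A" "v \<in> B"
        using uv V by blast
      then show ?thesis
        using e e_eq no_edges by blast
    qed
    then show "e \<in> cluster_edges (insert V\<^sub>1 P)"
      using e_eq uv(3) unfolding cluster_edges_def by blast
  qed
  show "cluster_edges (insert V\<^sub>1 P) \<subseteq> E - cross_edges E V\<^sub>1 (\<Union>P)"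
  proof
    fix e
    assume "e \<in> cluster_edges (insert V\<^sub>1 P)"
    then obtain u v A where "u \<noteq> v" "A \<in> insert V\<^sub>1 P" "u \<in> A" "v \<in> A" and e_eq: "e = {u, v}"
      unfolding cluster_edges_def by blast
    moreover have "A \<subseteq> V\<^sub>1 \<or> A \<subseteq> \<Union>P"
      using \<open>A \<in> insert V\<^sub>1 P\<close> by blast
    ultimately show "e \<in> E - cross_edges E V\<^sub>1 (\<Union>P)"
      using cliques V(2) doubleton_notin_cross_edges[of V\<^sub>1 "\<Union>P" u v E]
      unfolding is_clique_def by blast
  qed
qed

lemma diff_cross_edges_eq_multipartite_edges:
  assumes "simple_graph V E" and V: "V\<^sub>1 \<union> \<Union>P = V" "V\<^sub>1 \<inter> \<Union>P = {}"
    and P: "pairwise disjnt P"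
    and cliques: "is_clique (compl_edges V E) V\<^sub>1" "\<forall>A\<in>P. is_clique (compl_edges V E) A"
    and no_edges: "\<forall>A\<in>P. \<forall>B\<in>P. A \<noteq> B \<longrightarrow> (\<forall>u\<in>A. \<forall>v\<in>B. {u, v} \<notin> compl_edges V E)"
  shows "E - cross_edges E V\<^sub>1 (\<Union>P) = multipartite_edges P"
proof
  show "E - cross_edges E V\<^sub>1 (\<Union>P) \<subseteq> multipartite_edges P"
  proof
    fix e
    assume e: "e \<in> E - cross_edges E V\<^sub>1 (\<Union>P)"
    then obtain u v where uv: "u \<in> V" "v \<in> V" "u \<noteq> v" and e_eq: "e = {u, v}"
      using assms(1) unfolding simple_graph_def by blast
    have "{u, v} \<in> E"
      using e e_eq by blast
    then have not_compl: "{u, v} \<notin> compl_edges V E"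
      by (simp add: doubleton_in_compl_edges_iff[OF uv])
    have "\<not> (u \<in> V\<^sub>1 \<or> v \<in> V\<^sub>1)"
      using e e_eq uv not_compl cliques(1) V(1) doubleton_in_cross_edgesI[of u v E V\<^sub>1 "\<Union>P"]
      unfolding is_clique_def by blast
    then obtain A B where "A \<in> P" "B \<in> P" "u \<in> A" "v \<in> B"
      using uv V(1) by blast
    moreover have "A \<noteq> B"
      using calculation not_compl cliques(2) uv(3) unfolding is_clique_def by blast
    ultimately show "e \<in> multipartite_edges P"
      unfolding e_eq multipartite_edges_def by blast
  qed
  show "multipartite_edges P \<subseteq> E - cross_edges E V\<^sub>1 (\<Union>P)"
  proof
    fix e
    assume "e \<in> multipartite_edges P"
    then obtain u v A B where "A \<in> P" "B \<in> P" "A \<noteq> B" "u \<in> A" "v \<in> B"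
      and e_eq: "e = {u, v}"
      unfolding multipartite_edges_def by blast
    moreover have "u \<noteq> v"
      using calculation pairwise_disjnt_eq[OF P] by blast
    ultimately show "e \<in> E - cross_edges E V\<^sub>1 (\<Union>P)"
      using no_edges V doubleton_in_compl_edges_iff[of u V v E]
        doubleton_notin_cross_edges[of V\<^sub>1 "\<Union>P" u v E] by blast
  qed
qed

lemma p_num_le_2_if_split_form:
  assumes "simple_graph V E" and "split_form V E"
  shows "p_num V E \<le> 2"
proof -
  obtain V\<^sub>1 P where V: "V\<^sub>1 \<union> \<Union>P = V" "V\<^sub>1 \<inter> \<Union>P = {}" and P: "pairwise disjnt P"
    and cliques: "is_clique E V\<^sub>1" "\<forall>A\<in>P. is_clique E A"
    and no_edges: "\<forall>A\<in>P. \<forall>B\<in>P. A \<noteq> B \<longrightarrow> (\<forall>u\<in>A. \<forall>v\<in>B. {u, v} \<notin> E)"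
    using assms(2) by (rule split_formE)
  have "E - cross_edges E V\<^sub>1 (\<Union>P) = cluster_edges (insert V\<^sub>1 P)"
    using assms(1) V cliques no_edges by (rule diff_cross_edges_eq_cluster_edges)
  moreover have "pairwise disjnt (insert V\<^sub>1 P)"
    using P V(2) by (auto simp: pairwise_insert disjnt_def)
  ultimately have "comparability (E - cross_edges E V\<^sub>1 (\<Union>P))"
    by (simp add: comparability_cluster_edges)
  then show ?thesis
    by (rule p_num_le_2I[OF cross_edges_subset comparability_cross_edges[OF V(2)]])
qed

lemma p_num_le_2_if_compl_split_form:
  assumes "simple_graph V E" and "split_form V (compl_edges V E)"
  shows "p_num V E \<le> 2"
proof -
  obtain V\<^sub>1 P where V: "V\<^sub>1 \<union> \<Union>P = V" "V\<^sub>1 \<inter> \<Union>P = {}" and P: "pairwise disjnt P"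
    and cliques: "is_clique (compl_edges V E) V\<^sub>1" "\<forall>A\<in>P. is_clique (compl_edges V E) A"
    and no_edges: "\<forall>A\<in>P. \<forall>B\<in>P. A \<noteq> B \<longrightarrow> (\<forall>u\<in>A. \<forall>v\<in>B. {u, v} \<notin> compl_edges V E)"
    using assms(2) by (rule split_formE)
  have "E - cross_edges E V\<^sub>1 (\<Union>P) = multipartite_edges P"
    using assms(1) V P cliques no_edges by (rule diff_cross_edges_eq_multipartite_edges)
  then have "comparability (E - cross_edges E V\<^sub>1 (\<Union>P))"
    by (simp add: comparability_multipartite_edges[OF P])
  then show ?thesis
    by (rule p_num_le_2I[OF cross_edges_subset comparability_cross_edges[OF V(2)]])
qed

theorem theorem3:
  fixes V :: "'a set" and E :: "'a set set"
  assumes "simple_graph V E" and "GSP V E"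
  shows "p_num V E \<le> 2"
  using assms p_num_le_2_if_split_form p_num_le_2_if_compl_split_form
  unfolding GSP_def by blast

end
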